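(* Let $n\ge 2$, let $K\subset\mathbb{R}^n$ be a convex body of constant width $\Theta$, and let $\gamma\subset\mathbb{R}^n$ be any curve such that $K\subset\operatorname{co}(\gamma)$. Then $$ \operatorname{length}(\gamma)\ge \frac{2(\pi-1)\,\Gamma\!\left(\frac{n+1}{2}\right)}{\sqrt{\pi}\,\Gamma\!\left(\frac{n}{2}\right)}\cdot\Theta, $$ where $\Gamma$ is the gamma function.
   Context: $\mathbb{R}^n$ carries the standard Euclidean metric $d$. A convex body is any nonempty compact convex subset of $\mathbb{R}^n$. $\operatorname{co}(A)$ denotes the convex hull of $A$. The support function of $K$ is $h(K,u)=\sup\{(x,u):x\in K\}$ and the width function is $w(K,u)=h(K,u)+h(K,-u)$ for $u$ in the unit sphere $S^{n-1}$; $K$ has constant width $\Theta$ if $w(K,u)=\Theta$ for all $u\in S^{n-1}$. A curve is the image of a continuous map $\varphi:[a,b]\to\mathbb{R}^n$; its length is $\operatorname{length}(\gamma)=\sup\sum_{i=1}^m d(\varphi(t_{i-1}),\varphi(t_i))$ over all partitions $a=t_0<\dots<t_m=b$ (possibly $+\infty$). *)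

theory Defs
  imports "HOL-Analysis.Analysis"
begin

definition convex_body :: "'a::euclidean_space set \<Rightarrow> bool" where
  "convex_body K \<longleftrightarrow> K \<noteq> {} \<and> compact K \<and> convex K"

definition support_fun :: "'a::euclidean_space set \<Rightarrow> 'a \<Rightarrow> real" where
  "support_fun K u = (SUP x\<in>K. x \<bullet> u)"

definition width_fun :: "'a::euclidean_space set \<Rightarrow> 'a \<Rightarrow> real" where
  "width_fun K u = support_fun K u + support_fun K (- u)"

definition constant_width :: "'a::euclidean_space set \<Rightarrow> real \<Rightarrow> bool" where
  "constant_width K \<Theta> \<longleftrightarrow> (\<forall>u. norm u = 1 \<longrightarrow> width_fun K u = \<Theta>)"

definition curve_length :: "(real \<Rightarrow> 'a::euclidean_space) \<Rightarrow> real \<Rightarrow> real \<Rightarrow> ereal" where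
  "curve_length \<phi> a b =
     (SUP (m, t) \<in> {(m::nat, t::nat \<Rightarrow> real). 0 < m \<and> t 0 = a \<and> t m = b \<and> (\<forall>i<m. t i < t (Suc i))}.
        ereal (\<Sum>i=1..m. dist (\<phi> (t (i - 1))) (\<phi> (t i))))"

end

(*
  For every unit vector u the projection of the curve onto u spans at least Theta, because
  K lies in the convex hull of the curve and has width Theta in direction u. Choose an
  orthonormal frame e, b_1, ..., b_(n-1) with every b_i orthogonal to the chord
  phi b - phi a, and an inscribed polygon through the parameters where these spans are
  attained. Projected onto b_i the polygon is closed, so its total variation is at least
  2 Theta; projected onto e it is at least Theta. By Minkowski's and Bessel's inequalities the
  length of the polygon dominates the Euclidean norm of the vector of these n variations,
  hence length >= sqrt (4 n - 3) Theta. Log-convexity of Gamma gives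
  Gamma ((n + 1) / 2) <= sqrt (n / 2) Gamma (n / 2), which bounds the stated constant by
  sqrt (4 n - 3).
*)
theory Submission
  imports Defs
begin

lemma Gamma_add_half_squared_le:
  fixes x :: real
  assumes "0 < x"
  shows "Gamma (x + 1/2) ^ 2 \<le> x * Gamma x ^ 2"
proof -
  have Gamma_pos: "0 < Gamma x" "0 < Gamma (x + 1)" "0 < Gamma (x + 1/2)"
    using assms by (simp_all add: Gamma_real_pos)
  have "x + 1/2 = (1 - 1/2) *\<^sub>R x + (1/2) *\<^sub>R (x + 1)" by (simp add: field_simps)
  then have "2 * ln (Gamma (x + 1/2)) \<le> ln (Gamma x) + ln (Gamma (x + 1))"
    using convex_onD[OF log_convex_Gamma_real, of "1/2" x "x + 1"] assms by simp
  then have "ln (Gamma (x + 1/2) ^ 2) \<le> ln (Gamma x * Gamma (x + 1))"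
    using Gamma_pos by (simp add: ln_mult ln_realpow)
  then have "Gamma (x + 1/2) ^ 2 \<le> Gamma x * Gamma (x + 1)"
    using Gamma_pos by simp
  also have "\<dots> = x * Gamma x ^ 2"
    using assms by (subst Gamma_plus1) (auto simp: power2_eq_square elim!: nonpos_Ints_cases)
  finally show ?thesis .
qed

lemma Gamma_ratio_constant_le_sqrt:
  assumes "2 \<le> n"
  shows "2 * (pi - 1) * Gamma (real (n + 1) / 2) / (sqrt pi * Gamma (real n / 2))
    \<le> sqrt (4 * real n - 3)"
proof -
  define q where "q = Gamma (real (n + 1) / 2) / Gamma (real n / 2)"
  have pi: "3.14 \<le> pi" "pi \<le> 3.15" using pi_approx by auto
  have "(2 * (pi - 1) / sqrt pi * q) ^ 2 \<le> 4 * real n - 3"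
  proof (cases "n = 2")
    \<comment> \<open>Log-convexity alone gives only \<open>2 (pi - 1) / sqrt pi\<close> here, which exceeds \<open>sqrt 5\<close>.\<close>
    case True
    have "Gamma (1/2 + 1 :: real) = 1/2 * Gamma (1/2)"
      by (rule Gamma_plus1) (auto elim!: nonpos_Ints_cases)
    then have "Gamma (3/2 :: real) = sqrt pi / 2" by (simp add: Gamma_one_half_real)
    then have "q = sqrt pi / 2" using True by (simp add: q_def)
    then have "2 * (pi - 1) / sqrt pi * q = pi - 1" using pi_gt_zero by (simp only:) simp
    moreover have "(pi - 1) ^ 2 \<le> 2.15 ^ 2" using pi by (intro power_mono) auto
    ultimately show ?thesis using True by (simp add: power2_eq_square)
  next
    case False
    have "0 < Gamma (real n / 2)" using assms by (intro Gamma_real_pos) simp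
    then have Gamma_pos: "0 < Gamma (real n / 2) ^ 2" by simp
    have half: "real (n + 1) / 2 = real n / 2 + 1/2" by (simp add: field_simps)
    have "q ^ 2 = Gamma (real n / 2 + 1/2) ^ 2 / Gamma (real n / 2) ^ 2"
      by (simp only: q_def half power_divide)
    also have "\<dots> \<le> real n / 2"
      unfolding pos_divide_le_eq[OF Gamma_pos] using assms by (intro Gamma_add_half_squared_le) simp
    finally have "q ^ 2 \<le> real n / 2" .
    have "(2 * (pi - 1) / sqrt pi * q) ^ 2 = 4 * (pi - 1)^2 / pi * q ^ 2"
      by (simp add: power_mult_distrib power_divide power2_eq_square algebra_simps)
    also have "\<dots> \<le> 4 * (pi - 1)^2 / pi * (real n / 2)"
      using \<open>q ^ 2 \<le> real n / 2\<close> by (rule mult_left_mono) simp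
    also have "\<dots> = 2 * real n * ((pi - 1)^2 / pi)" by simp
    also have "\<dots> \<le> 2 * real n * (2.15^2 / 3.14)"
      using pi by (intro mult_left_mono frac_le power_mono) auto
    also have "\<dots> \<le> 4 * real n - 3"
      using False assms by (simp add: power2_eq_square)
    finally show ?thesis .
  qed
  then show ?thesis by (simp add: q_def real_le_rsqrt)
qed

lemma abs_diff_le_sum_abs_diffs:
  fixes g :: "nat \<Rightarrow> real"
  assumes "i \<le> j"
  shows "\<bar>g j - g i\<bar> \<le> (\<Sum>k = i..<j. \<bar>g (Suc k) - g k\<bar>)"
  using sum_Suc_diff'[OF assms, of g] sum_abs[of "\<lambda>k. g (Suc k) - g k" "{i..<j}"] by simp

lemma sum_abs_diffs_ge:
  fixes g :: "nat \<Rightarrow> real"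
  assumes "i \<le> m" "j \<le> m"
  shows "\<bar>g i - g j\<bar> \<le> (\<Sum>k<m. \<bar>g (Suc k) - g k\<bar>)"
    and "2 * \<bar>g i - g j\<bar> - \<bar>g m - g 0\<bar> \<le> (\<Sum>k<m. \<bar>g (Suc k) - g k\<bar>)"
proof -
  let ?V = "\<lambda>p q. \<Sum>k = p..<q. \<bar>g (Suc k) - g k\<bar>"
  have "\<bar>g i - g j\<bar> \<le> ?V 0 m \<and> 2 * \<bar>g i - g j\<bar> - \<bar>g m - g 0\<bar> \<le> ?V 0 m"
    if "i \<le> j" "j \<le> m" for i j
  proof -
    have "?V 0 m = ?V 0 i + ?V i j + ?V j m"
      using that by (simp add: sum.atLeastLessThan_concat)
    moreover have "\<bar>g i - g j\<bar> \<le> \<bar>g i - g 0\<bar> + \<bar>g m - g 0\<bar> + \<bar>g m - g j\<bar>"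
      using abs_triangle_ineq[of "g i - g 0" "g 0 - g j"] abs_triangle_ineq[of "g 0 - g m" "g m - g j"]
      by (simp add: abs_minus_commute)
    ultimately show ?thesis
      using abs_diff_le_sum_abs_diffs[of 0 i g, OF le0] abs_diff_le_sum_abs_diffs[OF that(1), of g]
        abs_diff_le_sum_abs_diffs[OF that(2), of g]
      by (simp add: abs_minus_commute)
  qed
  from this[of i j] this[of j i] assms
  show "\<bar>g i - g j\<bar> \<le> (\<Sum>k<m. \<bar>g (Suc k) - g k\<bar>)"
    and "2 * \<bar>g i - g j\<bar> - \<bar>g m - g 0\<bar> \<le> (\<Sum>k<m. \<bar>g (Suc k) - g k\<bar>)"
    by (cases "i \<le> j"; simp add: atLeast0LessThan abs_minus_commute)+
qed

lemma L2_set_inner_le_norm: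
  fixes v :: "'a::euclidean_space"
  assumes "finite C" "pairwise orthogonal C" "\<And>c. c \<in> C \<Longrightarrow> norm c = 1"
  shows "L2_set (\<lambda>c. v \<bullet> c) C \<le> norm v"
proof -
  define z where "z = (\<Sum>c\<in>C. (v \<bullet> c) *\<^sub>R c)"
  have "pairwise (\<lambda>c c'. orthogonal ((v \<bullet> c) *\<^sub>R c) ((v \<bullet> c') *\<^sub>R c')) C"
    using assms(2) by (auto simp: pairwise_def orthogonal_clauses)
  then have "norm z ^ 2 = (\<Sum>c\<in>C. (v \<bullet> c) ^ 2)"
    unfolding z_def using assms(3) by (simp add: norm_sum_Pythagorean[OF assms(1)] power_mult_distrib)
  also have "\<dots> = v \<bullet> z"
    unfolding z_def by (simp add: inner_sum_right power2_eq_square)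
  also have "\<dots> \<le> norm v * norm z" by (rule norm_cauchy_schwarz)
  finally have "norm z \<le> norm v"
    by (cases "z = 0") (auto simp: power2_eq_square)
  moreover have "L2_set (\<lambda>c. v \<bullet> c) C = norm z"
    using \<open>norm z ^ 2 = _\<close> by (simp add: L2_set_def real_sqrt_unique)
  ultimately show ?thesis by simp
qed

lemma L2_set_sum_le_sum_L2_set:
  "L2_set (\<lambda>c. \<Sum>i\<in>I. f i c) C \<le> (\<Sum>i\<in>I. L2_set (f i) C)"
proof (induction I rule: infinite_finite_induct)
  case (insert i I)
  have "L2_set (\<lambda>c. \<Sum>i\<in>insert i I. f i c) C \<le> L2_set (f i) C + L2_set (\<lambda>c. \<Sum>i\<in>I. f i c) C"
    using insert.hyps L2_set_triangle_ineq[of "f i"] by simp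
  then show ?case using insert by simp
qed (simp_all add: L2_set_def)

lemma support_fun_le_of_subset_convex_hull:
  fixes K S :: "'a::euclidean_space set"
  assumes "K \<noteq> {}" "K \<subseteq> convex hull S" "\<And>x. x \<in> S \<Longrightarrow> x \<bullet> u \<le> c"
  shows "support_fun K u \<le> c"
proof -
  have "convex hull S \<subseteq> {x. u \<bullet> x \<le> c}"
    using assms(3) by (intro hull_minimal convex_halfspace_le) (auto simp: inner_commute)
  then show ?thesis
    unfolding support_fun_def using assms(1,2) by (intro cSUP_least) (auto simp: inner_commute)
qed

lemma width_fun_le_projection_spread:
  fixes K S :: "'a::euclidean_space set"
  assumes "K \<noteq> {}" "K \<subseteq> convex hull S" "compact S"
  obtains x y where "x \<in> S" "y \<in> S" "width_fun K u \<le> (x - y) \<bullet> u"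
proof -
  have "S \<noteq> {}" using assms(1,2) by auto
  moreover have "continuous_on S (\<lambda>x. x \<bullet> u)" by (intro continuous_intros)
  ultimately obtain x y where "x \<in> S" "y \<in> S" "\<And>z. z \<in> S \<Longrightarrow> y \<bullet> u \<le> z \<bullet> u \<and> z \<bullet> u \<le> x \<bullet> u"
    using continuous_attains_sup[OF assms(3)] continuous_attains_inf[OF assms(3)] by metis
  then have "support_fun K u \<le> x \<bullet> u" "support_fun K (- u) \<le> - (y \<bullet> u)"
    using assms(1,2) by (auto intro!: support_fun_le_of_subset_convex_hull)
  then show ?thesis
    using that[OF \<open>x \<in> S\<close> \<open>y \<in> S\<close>] by (simp add: width_fun_def inner_diff_left)
qed

lemma width_fun_nonneg:
  fixes K :: "'a::euclidean_space set"
  assumes "K \<noteq> {}" "bounded K"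
  shows "0 \<le> width_fun K u"
proof -
  obtain x where "x \<in> K" using assms(1) by blast
  have bdd: "bdd_above ((\<lambda>x. x \<bullet> v) ` K)" for v
    using bounded_linear_image[OF assms(2) bounded_linear_inner_left]
    by (rule bounded_imp_bdd_above)
  have "x \<bullet> u \<le> support_fun K u" "x \<bullet> (- u) \<le> support_fun K (- u)"
    unfolding support_fun_def by (rule cSUP_upper[OF \<open>x \<in> K\<close> bdd])+
  then show ?thesis by (simp add: width_fun_def)
qed

lemma constant_width_nonneg:
  fixes K :: "'a::euclidean_space set"
  assumes "convex_body K" "constant_width K \<Theta>"
  shows "0 \<le> \<Theta>"
proof -
  obtain u :: 'a where "u \<in> Basis" using nonempty_Basis by blast
  then have "width_fun K u = \<Theta>"
    using assms(2) by (simp add: constant_width_def)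
  moreover have "0 \<le> width_fun K u"
    using assms(1) by (intro width_fun_nonneg) (auto simp: convex_body_def compact_imp_bounded)
  ultimately show ?thesis by simp
qed

lemma constant_width_curve_spread:
  fixes K :: "'a::euclidean_space set" and \<phi> :: "real \<Rightarrow> 'a"
  assumes "convex_body K" "constant_width K \<Theta>"
    and "continuous_on {a..b} \<phi>" "K \<subseteq> convex hull (\<phi> ` {a..b})" "norm u = 1"
  shows "\<exists>s\<in>{a..b}. \<exists>s'\<in>{a..b}. \<Theta> \<le> (\<phi> s - \<phi> s') \<bullet> u"
proof -
  have "K \<noteq> {}" using assms(1) by (simp add: convex_body_def)
  obtain x y where "x \<in> \<phi> ` {a..b}" "y \<in> \<phi> ` {a..b}" "width_fun K u \<le> (x - y) \<bullet> u"
    by (rule width_fun_le_projection_spread[OF \<open>K \<noteq> {}\<close> assms(4)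
          compact_continuous_image[OF assms(3) compact_Icc]])
  then show ?thesis
    using assms(2,5) by (fastforce simp: constant_width_def)
qed

lemma orthonormal_frame_orthogonal_to:
  fixes d :: "'a::euclidean_space"
  obtains e B where "finite B" "e \<notin> B" "pairwise orthogonal (insert e B)"
    "\<And>c. c \<in> insert e B \<Longrightarrow> norm c = 1" "card B = DIM('a) - 1" "\<And>c. c \<in> B \<Longrightarrow> d \<bullet> c = 0"
proof -
  obtain w :: 'a where "w \<noteq> 0" and w: "\<And>x. w \<bullet> x = 0 \<Longrightarrow> d \<bullet> x = 0"
  proof (cases "d = 0")
    case True
    obtain w :: 'a where "w \<in> Basis" using nonempty_Basis by blast
    with True show ?thesis using that[of w] nonzero_Basis by auto
  qed (use that in blast)
  obtain B where B: "B \<subseteq> {x. w \<bullet> x = 0}" "pairwise orthogonal B" "\<And>x. x \<in> B \<Longrightarrow> norm x = 1"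
    "independent B" "card B = dim {x. w \<bullet> x = 0}"
    by (rule orthonormal_basis_subspace[OF subspace_hyperplane[of w]]) blast
  define e where "e = (1 / norm w) *\<^sub>R w"
  have "norm e = 1" "w \<bullet> e \<noteq> 0"
    using \<open>w \<noteq> 0\<close> by (simp_all add: e_def)
  moreover have "orthogonal e x" if "x \<in> B" for x
    using B(1) that by (auto simp: e_def orthogonal_def)
  ultimately show ?thesis
    using B dim_hyperplane[OF \<open>w \<noteq> 0\<close>] independent_imp_finite[OF B(4)] w
    by (intro that[of B e]) (auto simp: pairwise_insert orthogonal_commute)
qed

lemma curve_length_ge_inscribed_polygon:
  fixes \<phi> :: "real \<Rightarrow> 'a::euclidean_space"
  assumes "a < b" "finite F" "F \<subseteq> {a..b}"
  obtains m t where "t 0 = a" "t m = b" "F \<subseteq> t ` {..m}"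
    "ereal (\<Sum>k<m. norm (\<phi> (t (Suc k)) - \<phi> (t k))) \<le> curve_length \<phi> a b"
proof -
  define L where "L = sorted_list_of_set (insert a (insert b F))"
  define m where "m = length L - 1"
  define t where "t i = L ! i" for i
  have set_L: "set L = insert a (insert b F)" and sorted_L: "sorted_wrt (<) L"
    using assms(2) unfolding L_def
    by (simp_all only: set_sorted_list_of_set strict_sorted_list_of_set finite_insert)
  have "2 \<le> length L"
    unfolding L_def length_sorted_list_of_set
    using assms(1,2) card_mono[of "insert a (insert b F)" "{a, b}"] by auto
  then have range_t: "t ` {..m} = set L"
    by (auto simp: t_def m_def set_conv_nth less_Suc_eq_le[symmetric])
  have t_less: "t i < t j" if "i < j" "j \<le> m" for i j
    using sorted_wrt_nth_less[OF sorted_L that(1)] that \<open>2 \<le> length L\<close> by (simp add: t_def m_def)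
  have t_between: "a \<le> t i \<and> t i \<le> b" if "i \<le> m" for i
  proof -
    have "t i \<in> insert a (insert b F)" using that range_t set_L by blast
    then show ?thesis using assms(1,3) by auto
  qed
  obtain i j where "i \<le> m" "t i = a" "j \<le> m" "t j = b"
    using range_t set_L by (metis atMost_iff imageE insertCI)
  moreover from this have "t 0 \<le> t i" "t j \<le> t m"
    using t_less[of 0 i] t_less[of j m] by (cases "i = 0"; cases "j = m"; simp)+
  ultimately have "t 0 = a" "t m = b"
    using t_between[of 0] t_between[of m] by auto
  moreover have "F \<subseteq> t ` {..m}" using range_t set_L by blast
  moreover have "ereal (\<Sum>k<m. norm (\<phi> (t (Suc k)) - \<phi> (t k))) \<le> curve_length \<phi> a b"
  proof -
    have "(\<Sum>k<m. norm (\<phi> (t (Suc k)) - \<phi> (t k))) = (\<Sum>i=1..m. dist (\<phi> (t (i - 1))) (\<phi> (t i)))"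
      by (simp add: sum.atLeast1_atMost_eq dist_norm norm_minus_commute)
    then show ?thesis
      unfolding curve_length_def using \<open>t 0 = a\<close> \<open>t m = b\<close> \<open>2 \<le> length L\<close> t_less
      by (intro SUP_upper2[of "(m, t)"]) (auto simp: m_def)
  qed
  ultimately show ?thesis by (rule that)
qed

lemma sum_abs_inner_diffs_ge:
  fixes p :: "nat \<Rightarrow> 'a::real_inner"
  assumes "i \<le> m" "j \<le> m" "\<Theta> \<le> (p i - p j) \<bullet> c"
  shows "\<Theta> \<le> (\<Sum>k<m. \<bar>(p (Suc k) - p k) \<bullet> c\<bar>)"
    and "2 * \<Theta> - \<bar>(p m - p 0) \<bullet> c\<bar> \<le> (\<Sum>k<m. \<bar>(p (Suc k) - p k) \<bullet> c\<bar>)"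
proof -
  define g where "g k = p k \<bullet> c" for k
  have sum_g: "(\<Sum>k<m. \<bar>(p (Suc k) - p k) \<bullet> c\<bar>) = (\<Sum>k<m. \<bar>g (Suc k) - g k\<bar>)"
    and chord: "(p m - p 0) \<bullet> c = g m - g 0"
    by (simp_all add: g_def inner_diff_left)
  have "\<Theta> \<le> \<bar>g i - g j\<bar>"
    using assms(3) by (simp add: g_def inner_diff_left)
  then show "\<Theta> \<le> (\<Sum>k<m. \<bar>(p (Suc k) - p k) \<bullet> c\<bar>)"
    unfolding sum_g using sum_abs_diffs_ge(1)[OF assms(1,2)] by (rule order_trans)
  from \<open>\<Theta> \<le> \<bar>g i - g j\<bar>\<close> have "2 * \<Theta> - \<bar>g m - g 0\<bar> \<le> 2 * \<bar>g i - g j\<bar> - \<bar>g m - g 0\<bar>"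
    by simp
  then show "2 * \<Theta> - \<bar>(p m - p 0) \<bullet> c\<bar> \<le> (\<Sum>k<m. \<bar>(p (Suc k) - p k) \<bullet> c\<bar>)"
    unfolding sum_g chord using sum_abs_diffs_ge(2)[OF assms(1,2)] by (rule order_trans)
qed

lemma polygon_length_ge_sqrt_excursions:
  fixes p :: "nat \<Rightarrow> 'a::euclidean_space"
  assumes "finite B" "e \<notin> B" "pairwise orthogonal (insert e B)"
    and "\<And>c. c \<in> insert e B \<Longrightarrow> norm c = 1"
    and "\<And>c. c \<in> B \<Longrightarrow> (p m - p 0) \<bullet> c = 0"
    and "\<And>c. c \<in> insert e B \<Longrightarrow> \<exists>i\<le>m. \<exists>j\<le>m. \<Theta> \<le> (p i - p j) \<bullet> c"
    and "0 \<le> \<Theta>"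
  shows "sqrt (4 * card B + 1) * \<Theta> \<le> (\<Sum>k<m. norm (p (Suc k) - p k))"
proof -
  define P where "P c = (\<Sum>k<m. \<bar>(p (Suc k) - p k) \<bullet> c\<bar>)" for c
  have P_ge: "\<Theta> \<le> P c" "2 * \<Theta> - \<bar>(p m - p 0) \<bullet> c\<bar> \<le> P c" if c: "c \<in> insert e B" for c
  proof -
    obtain i j where "i \<le> m" "j \<le> m" "\<Theta> \<le> (p i - p j) \<bullet> c"
      using assms(6)[OF c] by blast
    then show "\<Theta> \<le> P c" "2 * \<Theta> - \<bar>(p m - p 0) \<bullet> c\<bar> \<le> P c"
      unfolding P_def by (rule sum_abs_inner_diffs_ge)+
  qed
  let ?lower = "\<lambda>c. if c = e then \<Theta> else 2 * \<Theta>"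
  have "(\<Sum>c\<in>B. (?lower c)\<^sup>2) = card B * (2 * \<Theta>)\<^sup>2"
    using assms(2) by (subst sum.cong[OF refl, of _ _ "\<lambda>_. (2 * \<Theta>)\<^sup>2"]) auto
  moreover have "\<Theta>\<^sup>2 + card B * (2 * \<Theta>)\<^sup>2 = (4 * card B + 1) * \<Theta>\<^sup>2"
    by (simp add: algebra_simps power_mult_distrib)
  then have "sqrt (4 * card B + 1) * \<Theta> = sqrt (\<Theta>\<^sup>2 + card B * (2 * \<Theta>)\<^sup>2)"
    using assms(7) by (simp only: real_sqrt_mult real_sqrt_abs abs_of_nonneg)
  ultimately have "sqrt (4 * card B + 1) * \<Theta> = L2_set ?lower (insert e B)"
    using assms(1,2) by (simp add: L2_set_def)
  also have "\<dots> \<le> L2_set P (insert e B)"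
  proof (rule L2_set_mono)
    have "2 * \<Theta> \<le> P c" if "c \<in> B" for c
      using P_ge(2)[of c] assms(5)[OF that] that by simp
    then show "?lower c \<le> P c" if "c \<in> insert e B" for c
      using P_ge(1) that by auto
  qed (use assms(7) in auto)
  also have "\<dots> \<le> (\<Sum>k<m. L2_set (\<lambda>c. \<bar>(p (Suc k) - p k) \<bullet> c\<bar>) (insert e B))"
    unfolding P_def by (rule L2_set_sum_le_sum_L2_set)
  also have "\<dots> \<le> (\<Sum>k<m. norm (p (Suc k) - p k))"
    using L2_set_inner_le_norm[OF _ assms(3,4)] assms(1)
    by (intro sum_mono) (simp add: L2_set_def)
  finally show ?thesis .
qed

lemma curve_length_ge_sqrt_width:
  fixes K :: "'a::euclidean_space set" and \<phi> :: "real \<Rightarrow> 'a"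
  assumes "convex_body K" "constant_width K \<Theta>"
    and "a < b" "continuous_on {a..b} \<phi>" "K \<subseteq> convex hull (\<phi> ` {a..b})"
  shows "ereal (sqrt (4 * real DIM('a) - 3) * \<Theta>) \<le> curve_length \<phi> a b"
proof -
  obtain e B where frame: "finite B" "e \<notin> B" "pairwise orthogonal (insert e B)"
    "\<And>c. c \<in> insert e B \<Longrightarrow> norm c = 1" "card B = DIM('a) - 1"
    "\<And>c. c \<in> B \<Longrightarrow> (\<phi> b - \<phi> a) \<bullet> c = 0"
    using orthonormal_frame_orthogonal_to[of "\<phi> b - \<phi> a"] by metis
  have "\<exists>s\<in>{a..b}. \<exists>s'\<in>{a..b}. \<Theta> \<le> (\<phi> s - \<phi> s') \<bullet> c" if "c \<in> insert e B" for c
    using assms(1,2,4,5) frame(4)[OF that] by (rule constant_width_curve_spread)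
  then obtain s s' where s: "\<And>c. c \<in> insert e B \<Longrightarrow>
      s c \<in> {a..b} \<and> s' c \<in> {a..b} \<and> \<Theta> \<le> (\<phi> (s c) - \<phi> (s' c)) \<bullet> c"
    by metis
  have "finite (s ` insert e B \<union> s' ` insert e B)" "s ` insert e B \<union> s' ` insert e B \<subseteq> {a..b}"
    using frame(1) s by auto
  then obtain m t where t: "t 0 = a" "t m = b" "s ` insert e B \<union> s' ` insert e B \<subseteq> t ` {..m}"
    and length: "ereal (\<Sum>k<m. norm (\<phi> (t (Suc k)) - \<phi> (t k))) \<le> curve_length \<phi> a b"
    using curve_length_ge_inscribed_polygon[OF assms(3)] by metis
  have excursion: "\<exists>i\<le>m. \<exists>j\<le>m. \<Theta> \<le> (\<phi> (t i) - \<phi> (t j)) \<bullet> c" if "c \<in> insert e B" for c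
  proof -
    have "s c \<in> t ` {..m}" "s' c \<in> t ` {..m}" using t(3) that by auto
    then obtain i j where "i \<le> m" "j \<le> m" "s c = t i" "s' c = t j" by auto
    then show ?thesis using s[OF that] by metis
  qed
  have "sqrt (4 * card B + 1) * \<Theta> \<le> (\<Sum>k<m. norm (\<phi> (t (Suc k)) - \<phi> (t k)))"
    by (rule polygon_length_ge_sqrt_excursions[OF frame(1-4) _ excursion
          constant_width_nonneg[OF assms(1,2)]])
      (simp_all add: t(1,2) frame(6))
  moreover have "4 * card B + 1 = 4 * real DIM('a) - 3"
    using frame(5) DIM_positive[where 'a='a] by (simp add: of_nat_diff)
  ultimately have "ereal (sqrt (4 * real DIM('a) - 3) * \<Theta>)
      \<le> ereal (\<Sum>k<m. norm (\<phi> (t (Suc k)) - \<phi> (t k)))"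
    by (simp only: ereal_less_eq)
  then show ?thesis
    using length by (rule order_trans)
qed

theorem theorem3:
  fixes K :: "'a::euclidean_space set" and \<Theta> :: real
    and \<phi> :: "real \<Rightarrow> 'a" and a b :: real
  assumes "DIM('a) \<ge> 2"
    and "convex_body K" and "constant_width K \<Theta>"
    and "a < b" and "continuous_on {a..b} \<phi>"
    and "K \<subseteq> convex hull (\<phi> ` {a..b})"
  shows "curve_length \<phi> a b \<ge>
    ereal (2 * (pi - 1) * Gamma (real (DIM('a) + 1) / 2)
           / (sqrt pi * Gamma (real DIM('a) / 2)) * \<Theta>)"
proof -
  have "2 * (pi - 1) * Gamma (real (DIM('a) + 1) / 2) / (sqrt pi * Gamma (real DIM('a) / 2)) * \<Theta>
      \<le> sqrt (4 * real DIM('a) - 3) * \<Theta>"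
    using Gamma_ratio_constant_le_sqrt[OF assms(1)] constant_width_nonneg[OF assms(2,3)]
    by (rule mult_right_mono)
  then have "ereal (2 * (pi - 1) * Gamma (real (DIM('a) + 1) / 2)
      / (sqrt pi * Gamma (real DIM('a) / 2)) * \<Theta>) \<le> ereal (sqrt (4 * real DIM('a) - 3) * \<Theta>)"
    by (simp only: ereal_less_eq)
  also have "\<dots> \<le> curve_length \<phi> a b"
    by (rule curve_length_ge_sqrt_width[OF assms(2-6)])
  finally show ?thesis .
qed

end
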